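(* Let $\mathrm{X}$ be a compact Hausdorff space and $g_0,f\in C(\mathrm{X})_+^{-1}$. Then $$\lim_{n\to\infty}\Big(\big\|(ng_0^{-1}+f^{-1})^{-1}\big\|^{-1}-n\|g_0\|^{-1}\Big)^{-1}=\max\{f(x): x\in\operatorname{pk}(g_0)\}.$$
   Context: $C(\mathrm{X})_+^{-1}$ is the set of strictly positive continuous functions on $\mathrm{X}$, with sup-norm $\|\cdot\|$; $h^{-1}=1/h$ pointwise; $\operatorname{pk}(g)=\{x\in\mathrm{X}: g(x)=\|g\|\}$. *)

theory Defs
  imports "HOL-Analysis.Analysis"
begin

definition supnorm :: "('a \<Rightarrow> real) \<Rightarrow> real" where
  "supnorm g = (SUP x. \<bar>g x\<bar>)"

definition pk :: "('a \<Rightarrow> real) \<Rightarrow> 'a set" where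
  "pk g = {x. g x = supnorm g}"

end

theory Submission
  imports Defs
begin

text \<open>
  With \<open>M = \<parallel>g\<^sub>0\<parallel>\<close>, \<open>u = g\<^sub>0\<^sup>-\<^sup>1 - M\<^sup>-\<^sup>1 \<ge> 0\<close> and \<open>v = f\<^sup>-\<^sup>1\<close>, the reciprocal of the
  sup-norm of a positive function is the minimum of its reciprocal, so the expression
  inside the limit is \<open>(min (n u + v))\<^sup>-\<^sup>1\<close>. The zero set of \<open>u\<close> is \<open>pk g\<^sub>0\<close>, and the
  penalty terms \<open>n u\<close> force \<open>min (n u + v)\<close> to converge to the minimum of \<open>v\<close> on that
  zero set, which is \<open>(max f on pk g\<^sub>0)\<^sup>-\<^sup>1\<close>.
\<close>

lemma SUP_inverse_eq_inverse_INF: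
  fixes k :: "'a \<Rightarrow> real"
  assumes "x0 \<in> S" and "\<And>x. x \<in> S \<Longrightarrow> k x0 \<le> k x" and "0 < k x0"
  shows "(SUP x\<in>S. inverse (k x)) = inverse (INF x\<in>S. k x)"
proof -
  have "(INF x\<in>S. k x) = k x0"
    using assms by (intro cInf_eq_minimum) auto
  moreover have "(SUP x\<in>S. inverse (k x)) = inverse (k x0)"
    using assms by (intro cSup_eq_maximum) (auto intro: le_imp_inverse_le)
  ultimately show ?thesis by simp
qed

lemma Sup_eq_inverse_INF_inverse:
  fixes f :: "'a::topological_space \<Rightarrow> real"
  assumes "compact P" and "P \<noteq> {}" and "continuous_on P f" and "\<And>x. x \<in> P \<Longrightarrow> 0 < f x"
  shows "0 < (INF x\<in>P. inverse (f x))" and "Sup (f ` P) = inverse (INF x\<in>P. inverse (f x))"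
proof -
  obtain p where p: "p \<in> P" "\<And>x. x \<in> P \<Longrightarrow> f x \<le> f p"
    using continuous_attains_sup[OF assms(1-3)] by auto
  have "(INF x\<in>P. inverse (f x)) = inverse (f p)"
    using p assms(4) by (intro cInf_eq_minimum) (auto intro: le_imp_inverse_le)
  then show "0 < (INF x\<in>P. inverse (f x))"
    using p(1) assms(4) by simp
  have "(SUP x\<in>P. inverse (inverse (f x))) = inverse (INF x\<in>P. inverse (f x))"
    using p assms(4) by (intro SUP_inverse_eq_inverse_INF) (auto intro: le_imp_inverse_le)
  then show "Sup (f ` P) = inverse (INF x\<in>P. inverse (f x))"
    by simp
qed

lemma supnorm_eq_SUP: "(\<And>x. 0 < g x) \<Longrightarrow> supnorm g = (SUP x. g x)"
  by (simp add: supnorm_def abs_of_pos)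

lemma supnorm_attained:
  fixes g :: "'a::topological_space \<Rightarrow> real"
  assumes "compact (UNIV :: 'a set)" and "continuous_on UNIV g" and "\<And>x. 0 < g x"
  obtains s where "supnorm g = g s" and "\<And>x. g x \<le> g s"
proof -
  obtain s where s: "\<And>x. g x \<le> g s"
    using continuous_attains_sup[OF assms(1) _ assms(2)] by auto
  then have "supnorm g = g s"
    unfolding supnorm_eq_SUP[OF assms(3)] by (intro cSup_eq_maximum) auto
  with s that show ?thesis by blast
qed

lemma inverse_supnorm_inverse:
  fixes k :: "'a::topological_space \<Rightarrow> real"
  assumes "compact (UNIV :: 'a set)" and "continuous_on UNIV k" and "\<And>x. 0 < k x"
  shows "inverse (supnorm (\<lambda>x. inverse (k x))) = (INF x. k x)"
proof -
  obtain x0 where "\<And>x. k x0 \<le> k x"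
    using continuous_attains_inf[OF assms(1) _ assms(2)] by auto
  then have "(SUP x. inverse (k x)) = inverse (INF x. k x)"
    using assms(3) by (intro SUP_inverse_eq_inverse_INF) auto
  then show ?thesis
    using assms(3) by (simp add: supnorm_eq_SUP)
qed

lemma inverse_supnorm_parallel_sum:
  fixes g f :: "'a::topological_space \<Rightarrow> real" and c :: real
  assumes cpt: "compact (UNIV :: 'a set)"
    and g: "continuous_on UNIV g" "\<And>x. 0 < g x"
    and f: "continuous_on UNIV f" "\<And>x. 0 < f x"
    and "0 \<le> c"
  shows "inverse (supnorm (\<lambda>x. inverse (c * inverse (g x) + inverse (f x))))
           - c * inverse (supnorm g)
         = (INF x. c * (inverse (g x) - inverse (supnorm g)) + inverse (f x))"
proof -
  obtain s where s: "supnorm g = g s" "\<And>x. g x \<le> g s"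
    using supnorm_attained[OF cpt g] by blast
  have cont: "continuous_on UNIV (\<lambda>x. c * inverse (g x) + inverse (f x))"
    using g f by (intro continuous_intros) (auto simp: less_imp_neq[symmetric])
  have pos: "0 < c * inverse (g x) + inverse (f x)" for x
    using g(2)[of x] f(2)[of x] \<open>0 \<le> c\<close> by (simp add: add_nonneg_pos)
  have gap: "0 \<le> c * (inverse (g x) - inverse (supnorm g)) + inverse (f x)" for x
    using s g(2)[of x] f(2)[of x] \<open>0 \<le> c\<close>
    by (intro add_nonneg_nonneg mult_nonneg_nonneg) (auto simp: le_imp_inverse_le)
  have "inverse (supnorm (\<lambda>x. inverse (c * inverse (g x) + inverse (f x))))
          = (INF x. c * inverse (supnorm g) + (c * (inverse (g x) - inverse (supnorm g)) + inverse (f x)))"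
    unfolding inverse_supnorm_inverse[OF cpt cont pos] by (simp add: algebra_simps)
  also have "\<dots> = c * inverse (supnorm g)
                   + (INF x. c * (inverse (g x) - inverse (supnorm g)) + inverse (f x))"
    using gap by (intro Inf_add_eq bdd_belowI2[of _ 0]) auto
  finally show ?thesis by simp
qed

lemma continuous_positive_bounded_below:
  fixes u :: "'a::topological_space \<Rightarrow> real"
  assumes "compact S" and "continuous_on S u" and "\<And>x. x \<in> S \<Longrightarrow> 0 < u x"
  obtains d where "0 < d" and "\<And>x. x \<in> S \<Longrightarrow> d \<le> u x"
proof (cases "S = {}")
  case False
  then obtain q where "q \<in> S" and "\<And>x. x \<in> S \<Longrightarrow> u q \<le> u x"
    using continuous_attains_inf[OF assms(1) _ assms(2)] by auto
  with assms(3) that show ?thesis by blast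
qed (use that[of 1] in simp)

lemma eventually_INF_penalty_ge:
  fixes u v :: "'a::topological_space \<Rightarrow> real"
  assumes cpt: "compact (UNIV :: 'a set)"
    and u: "continuous_on UNIV u" "\<And>x. 0 \<le> u x"
    and v: "continuous_on UNIV v"
    and y: "\<And>x. u x = 0 \<Longrightarrow> y < v x"
  shows "\<forall>\<^sub>F n in sequentially. y \<le> (INF x. real n * u x + v x)"
proof -
  obtain b where b: "\<And>x. v b \<le> v x"
    using continuous_attains_inf[OF cpt _ v] by auto
  define S where "S = {x. v x \<le> y}"
  have "closed S"
    unfolding S_def by (rule closed_Collect_le[OF v continuous_on_const])
  then have "compact S"
    using compact_Int_closed[OF cpt] by simp
  moreover have "0 < u x" if "x \<in> S" for x
    using u(2)[of x] y[of x] that by (force simp: S_def)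
  ultimately obtain d where d: "0 < d" "\<And>x. x \<in> S \<Longrightarrow> d \<le> u x"
    using continuous_positive_bounded_below[OF _ continuous_on_subset[OF u(1)]] by blast
  obtain N :: nat where N: "(y - v b) / d \<le> real N"
    using real_arch_simple by blast
  have "y \<le> (INF x. real n * u x + v x)" if "N \<le> n" for n
  proof (rule cINF_greatest)
    fix x
    show "y \<le> real n * u x + v x"
    proof (cases "x \<in> S")
      case True
      have "y - v b \<le> real N * d"
        using N d(1) by (simp add: divide_le_eq)
      also have "\<dots> \<le> real n * u x"
        using that d True by (intro mult_mono) auto
      finally show ?thesis using b[of x] by linarith
    next
      case False
      have "0 \<le> real n * u x"
        using u(2)[of x] by simp
      with False show ?thesis
        by (simp add: S_def)
    qed
  qed simp
  then show ?thesis
    unfolding eventually_sequentially by blast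
qed

lemma tendsto_INF_penalty:
  fixes u v :: "'a::topological_space \<Rightarrow> real"
  assumes cpt: "compact (UNIV :: 'a set)"
    and u: "continuous_on UNIV u" "\<And>x. 0 \<le> u x"
    and v: "continuous_on UNIV v"
    and Z: "{x. u x = 0} \<noteq> {}"
  shows "(\<lambda>n. INF x. real n * u x + v x) \<longlonglongrightarrow> (INF x\<in>{x. u x = 0}. v x)"
proof -
  define Z where "Z = {x. u x = 0}"
  have "closed Z"
    unfolding Z_def by (rule closed_Collect_eq[OF u(1) continuous_on_const])
  then have "compact Z"
    using compact_Int_closed[OF cpt] by simp
  then obtain p where p: "p \<in> Z" "\<And>x. x \<in> Z \<Longrightarrow> v p \<le> v x"
    using continuous_attains_inf[OF _ Z continuous_on_subset[OF v]] by (auto simp: Z_def)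
  have m: "(INF x\<in>Z. v x) = v p"
    using p by (intro cInf_eq_minimum) auto
  obtain b where b: "\<And>x. v b \<le> v x"
    using continuous_attains_inf[OF cpt _ v] by auto
  have upper: "(INF x. real n * u x + v x) \<le> v p" for n
  proof -
    have "bdd_below (range (\<lambda>x. real n * u x + v x))"
      using b u(2) by (intro bdd_belowI2[of _ "v b"]) (simp add: add_increasing)
    then have "(INF x. real n * u x + v x) \<le> real n * u p + v p"
      by (rule cINF_lower) simp
    then show ?thesis
      using p(1) by (simp add: Z_def)
  qed
  show ?thesis
    unfolding Z_def[symmetric] m
  proof (rule order_tendstoI)
    fix y assume y: "y < v p"
    have "(y + v p) / 2 < v x" if "u x = 0" for x
      using y p(2)[of x] that by (simp add: Z_def)
    then have "\<forall>\<^sub>F n in sequentially. (y + v p) / 2 \<le> (INF x. real n * u x + v x)"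
      by (rule eventually_INF_penalty_ge[OF cpt u v])
    moreover have "y < (y + v p) / 2"
      using y by simp
    ultimately show "\<forall>\<^sub>F n in sequentially. y < (INF x. real n * u x + v x)"
      by (auto elim: eventually_mono intro: less_le_trans)
  next
    fix y assume "v p < y"
    then have "(INF x. real n * u x + v x) < y" for n
      using upper[of n] by linarith
    then show "\<forall>\<^sub>F n in sequentially. (INF x. real n * u x + v x) < y"
      by (intro always_eventually allI)
  qed
qed

theorem mainTheorem15:
  fixes g0 f :: "'a::t2_space \<Rightarrow> real"
  assumes "compact (UNIV :: 'a set)"
    and "continuous_on UNIV g0" and "\<And>x. g0 x > 0"
    and "continuous_on UNIV f" and "\<And>x. f x > 0"
  shows "(\<lambda>n::nat. inverse (inverse (supnorm (\<lambda>x. inverse (real n * inverse (g0 x) + inverse (f x))))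
                 - real n * inverse (supnorm g0)))
         \<longlonglongrightarrow> Sup (f ` pk g0)"
proof -
  note cpt = assms(1) and g0 = assms(2,3) and f = assms(4,5)
  obtain s where s: "supnorm g0 = g0 s" "\<And>x. g0 x \<le> g0 s"
    using supnorm_attained[OF cpt g0] by blast
  define u where "u x = inverse (g0 x) - inverse (supnorm g0)" for x
  have u_nonneg: "0 \<le> u x" for x
    using s g0(2)[of x] by (simp add: u_def le_imp_inverse_le)
  have u_cont: "continuous_on UNIV u"
    unfolding u_def using g0 by (intro continuous_intros) (auto simp: less_imp_neq[symmetric])
  have fi_cont: "continuous_on UNIV (\<lambda>x. inverse (f x))"
    using f by (intro continuous_intros) (auto simp: less_imp_neq[symmetric])
  have pk_eq: "pk g0 = {x. u x = 0}"
    by (auto simp: pk_def u_def)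
  have pk_compact: "compact (pk g0)"
    using compact_Int_closed[OF cpt closed_Collect_eq[OF u_cont continuous_on_const]]
    by (simp add: pk_eq)
  have pk_nonempty: "pk g0 \<noteq> {}"
    using s(1) by (auto simp: pk_def)
  have "(\<lambda>n. INF x. real n * u x + inverse (f x)) \<longlonglongrightarrow> (INF x\<in>pk g0. inverse (f x))"
    using tendsto_INF_penalty[OF cpt u_cont u_nonneg fi_cont] pk_nonempty by (simp add: pk_eq)
  then have "(\<lambda>n. inverse (INF x. real n * u x + inverse (f x))) \<longlonglongrightarrow> Sup (f ` pk g0)"
    using Sup_eq_inverse_INF_inverse[OF pk_compact pk_nonempty continuous_on_subset[OF f(1)]] f(2)
    by (auto intro: tendsto_inverse)
  then show ?thesis
    using inverse_supnorm_parallel_sum[OF cpt g0 f] by (simp add: u_def)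
qed

end
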